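(* In a pointed protomodular category, for an object $X$: if $X$ is strong-complete then it is complete${}^*$; if it is complete${}^*$ then it is complete; and if it is complete then it is proto-complete.
   Context: A pointed category with finite limits is protomodular if the split short five lemma holds. A normal monomorphism is a kernel of some morphism; a protosplit monomorphism is a kernel of a split epimorphism. A monomorphism $m:S\to Y$ is Bourn-normal if there is an equivalence relation $(R,r_1,r_2)$ on $Y$ and a morphism $\tilde m:S\times S\to R$ with $r_1\tilde m=m\pi_1$, $r_2\tilde m=m\pi_2$ such that the square $r_1\tilde m=m\pi_1$ is a pullback. An object $X$ is: proto-complete if every protosplit monomorphism with domain $X$ is a split monomorphism; complete if every normal monomorphism with domain $X$ is a split monomorphism; complete${}^*$ if every Bourn-normal monomorphism with domain $X$ is a split monomorphism; strong-complete if every protosplit monomorphism with domain $X$ is a split monomorphism with a unique retraction. *)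

theory Defs
  imports Main
begin

text \<open>Categories presented explicitly by objects, arrows, domain, codomain,
  identities and composition. Comp C g f is the composite g after f.\<close>

record ('o, 'a) cat =
  Obj  :: "'o set"
  Arr  :: "'a set"
  Dom  :: "'a \<Rightarrow> 'o"
  Cod  :: "'a \<Rightarrow> 'o"
  Idm  :: "'o \<Rightarrow> 'a"
  Comp :: "'a \<Rightarrow> 'a \<Rightarrow> 'a"

definition hom :: "('o, 'a) cat \<Rightarrow> 'o \<Rightarrow> 'o \<Rightarrow> 'a set" where
  "hom C X Y = {f \<in> Arr C. Dom C f = X \<and> Cod C f = Y}"

definition category :: "('o, 'a) cat \<Rightarrow> bool" where
  "category C \<longleftrightarrow>
     (\<forall>f \<in> Arr C. Dom C f \<in> Obj C \<and> Cod C f \<in> Obj C) \<and>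
     (\<forall>X \<in> Obj C. Idm C X \<in> hom C X X) \<and>
     (\<forall>f \<in> Arr C. \<forall>g \<in> Arr C. Cod C f = Dom C g \<longrightarrow>
        Comp C g f \<in> hom C (Dom C f) (Cod C g)) \<and>
     (\<forall>f \<in> Arr C. Comp C (Idm C (Cod C f)) f = f \<and> Comp C f (Idm C (Dom C f)) = f) \<and>
     (\<forall>f \<in> Arr C. \<forall>g \<in> Arr C. \<forall>h \<in> Arr C. Cod C f = Dom C g \<and> Cod C g = Dom C h \<longrightarrow>
        Comp C h (Comp C g f) = Comp C (Comp C h g) f)"

definition iso :: "('o, 'a) cat \<Rightarrow> 'a \<Rightarrow> bool" where
  "iso C f \<longleftrightarrow> f \<in> Arr C \<and>
     (\<exists>g \<in> hom C (Cod C f) (Dom C f).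
        Comp C g f = Idm C (Dom C f) \<and> Comp C f g = Idm C (Cod C f))"

definition mono :: "('o, 'a) cat \<Rightarrow> 'a \<Rightarrow> bool" where
  "mono C m \<longleftrightarrow> m \<in> Arr C \<and>
     (\<forall>f \<in> Arr C. \<forall>g \<in> Arr C. Cod C f = Dom C m \<and> Cod C g = Dom C m \<and> Dom C f = Dom C g
        \<and> Comp C m f = Comp C m g \<longrightarrow> f = g)"

definition split_mono :: "('o, 'a) cat \<Rightarrow> 'a \<Rightarrow> bool" where
  "split_mono C m \<longleftrightarrow> m \<in> Arr C \<and>
     (\<exists>r \<in> hom C (Cod C m) (Dom C m). Comp C r m = Idm C (Dom C m))"

definition split_epi :: "('o, 'a) cat \<Rightarrow> 'a \<Rightarrow> bool" where
  "split_epi C p \<longleftrightarrow> p \<in> Arr C \<and>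
     (\<exists>s \<in> hom C (Cod C p) (Dom C p). Comp C p s = Idm C (Cod C p))"

definition terminal_obj :: "('o, 'a) cat \<Rightarrow> 'o \<Rightarrow> bool" where
  "terminal_obj C T \<longleftrightarrow> T \<in> Obj C \<and> (\<forall>A \<in> Obj C. \<exists>!f. f \<in> hom C A T)"

definition initial_obj :: "('o, 'a) cat \<Rightarrow> 'o \<Rightarrow> bool" where
  "initial_obj C I \<longleftrightarrow> I \<in> Obj C \<and> (\<forall>A \<in> Obj C. \<exists>!f. f \<in> hom C I A)"

definition zero_obj :: "('o, 'a) cat \<Rightarrow> 'o \<Rightarrow> bool" where
  "zero_obj C Z \<longleftrightarrow> initial_obj C Z \<and> terminal_obj C Z"

definition pointed :: "('o, 'a) cat \<Rightarrow> bool" where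
  "pointed C \<longleftrightarrow> (\<exists>Z. zero_obj C Z)"

definition zero_mor :: "('o, 'a) cat \<Rightarrow> 'a \<Rightarrow> bool" where
  "zero_mor C f \<longleftrightarrow> f \<in> Arr C \<and>
     (\<exists>Z g h. zero_obj C Z \<and> g \<in> hom C (Dom C f) Z \<and> h \<in> hom C Z (Cod C f) \<and> f = Comp C h g)"

definition is_pullback :: "('o, 'a) cat \<Rightarrow> 'a \<Rightarrow> 'a \<Rightarrow> 'a \<Rightarrow> 'a \<Rightarrow> bool" where
  "is_pullback C f g p q \<longleftrightarrow>
     f \<in> Arr C \<and> g \<in> Arr C \<and> p \<in> Arr C \<and> q \<in> Arr C \<and>
     Cod C f = Cod C g \<and> Dom C p = Dom C q \<and> Cod C p = Dom C f \<and> Cod C q = Dom C g \<and>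
     Comp C f p = Comp C g q \<and>
     (\<forall>u \<in> Arr C. \<forall>v \<in> Arr C. Dom C u = Dom C v \<and> Cod C u = Dom C f \<and> Cod C v = Dom C g \<and>
        Comp C f u = Comp C g v \<longrightarrow>
        (\<exists>!h. h \<in> hom C (Dom C u) (Dom C p) \<and> Comp C p h = u \<and> Comp C q h = v))"

definition is_product :: "('o, 'a) cat \<Rightarrow> 'o \<Rightarrow> 'o \<Rightarrow> 'a \<Rightarrow> 'a \<Rightarrow> bool" where
  "is_product C A B p q \<longleftrightarrow>
     A \<in> Obj C \<and> B \<in> Obj C \<and> p \<in> Arr C \<and> q \<in> Arr C \<and>
     Dom C p = Dom C q \<and> Cod C p = A \<and> Cod C q = B \<and>
     (\<forall>u \<in> Arr C. \<forall>v \<in> Arr C. Dom C u = Dom C v \<and> Cod C u = A \<and> Cod C v = B \<longrightarrow>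
        (\<exists>!h. h \<in> hom C (Dom C u) (Dom C p) \<and> Comp C p h = u \<and> Comp C q h = v))"

text \<open>Finite limits: a terminal object and all pullbacks (equivalently, all finite limits).\<close>
definition has_finite_limits :: "('o, 'a) cat \<Rightarrow> bool" where
  "has_finite_limits C \<longleftrightarrow> (\<exists>T. terminal_obj C T) \<and>
     (\<forall>f \<in> Arr C. \<forall>g \<in> Arr C. Cod C f = Cod C g \<longrightarrow> (\<exists>p q. is_pullback C f g p q))"

definition is_kernel :: "('o, 'a) cat \<Rightarrow> 'a \<Rightarrow> 'a \<Rightarrow> bool" where
  "is_kernel C k f \<longleftrightarrow> k \<in> Arr C \<and> f \<in> Arr C \<and> Cod C k = Dom C f \<and>
     zero_mor C (Comp C f k) \<and>
     (\<forall>g \<in> Arr C. Cod C g = Dom C f \<and> zero_mor C (Comp C f g) \<longrightarrow>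
        (\<exists>!h. h \<in> hom C (Dom C g) (Dom C k) \<and> Comp C k h = g))"

definition split_ext :: "('o, 'a) cat \<Rightarrow> 'a \<Rightarrow> 'a \<Rightarrow> 'a \<Rightarrow> bool" where
  "split_ext C k p s \<longleftrightarrow> is_kernel C k p \<and> s \<in> hom C (Cod C p) (Dom C p) \<and>
     Comp C p s = Idm C (Cod C p)"

text \<open>Pointed protomodularity: the split short five lemma.\<close>
definition protomodular :: "('o, 'a) cat \<Rightarrow> bool" where
  "protomodular C \<longleftrightarrow>
     (\<forall>k p s k' p' s' u v w.
        split_ext C k p s \<and> split_ext C k' p' s' \<and>
        u \<in> hom C (Dom C k) (Dom C k') \<and> v \<in> hom C (Dom C p) (Dom C p') \<and>
        w \<in> hom C (Cod C p) (Cod C p') \<and>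
        Comp C v k = Comp C k' u \<and> Comp C p' v = Comp C w p \<and> Comp C v s = Comp C s' w \<and>
        iso C u \<and> iso C w \<longrightarrow> iso C v)"

definition normal_mono :: "('o, 'a) cat \<Rightarrow> 'a \<Rightarrow> bool" where
  "normal_mono C m \<longleftrightarrow> (\<exists>f. is_kernel C m f)"

definition protosplit_mono :: "('o, 'a) cat \<Rightarrow> 'a \<Rightarrow> bool" where
  "protosplit_mono C m \<longleftrightarrow> (\<exists>p. split_epi C p \<and> is_kernel C m p)"

definition equiv_rel :: "('o, 'a) cat \<Rightarrow> 'o \<Rightarrow> 'o \<Rightarrow> 'a \<Rightarrow> 'a \<Rightarrow> bool" where
  "equiv_rel C Y R r1 r2 \<longleftrightarrow>
     Y \<in> Obj C \<and> R \<in> Obj C \<and> r1 \<in> hom C R Y \<and> r2 \<in> hom C R Y \<and>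
     (\<comment> \<open>jointly monic\<close>
      \<forall>f \<in> Arr C. \<forall>g \<in> Arr C. Cod C f = R \<and> Cod C g = R \<and> Dom C f = Dom C g \<and>
        Comp C r1 f = Comp C r1 g \<and> Comp C r2 f = Comp C r2 g \<longrightarrow> f = g) \<and>
     (\<comment> \<open>reflexive\<close>
      \<exists>d \<in> hom C Y R. Comp C r1 d = Idm C Y \<and> Comp C r2 d = Idm C Y) \<and>
     (\<comment> \<open>symmetric\<close>
      \<exists>\<sigma> \<in> hom C R R. Comp C r1 \<sigma> = r2 \<and> Comp C r2 \<sigma> = r1) \<and>
     (\<comment> \<open>transitive\<close>
      \<forall>p1 p2. is_pullback C r2 r1 p1 p2 \<longrightarrow>
        (\<exists>\<tau> \<in> hom C (Dom C p1) R. Comp C r1 \<tau> = Comp C r1 p1 \<and> Comp C r2 \<tau> = Comp C r2 p2))"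

definition bourn_normal :: "('o, 'a) cat \<Rightarrow> 'a \<Rightarrow> bool" where
  "bourn_normal C m \<longleftrightarrow> mono C m \<and>
     (\<exists>R r1 r2 \<pi>1 \<pi>2 mt. equiv_rel C (Cod C m) R r1 r2 \<and>
        is_product C (Dom C m) (Dom C m) \<pi>1 \<pi>2 \<and>
        mt \<in> hom C (Dom C \<pi>1) R \<and>
        Comp C r1 mt = Comp C m \<pi>1 \<and> Comp C r2 mt = Comp C m \<pi>2 \<and>
        is_pullback C r1 m mt \<pi>1)"

definition proto_complete :: "('o, 'a) cat \<Rightarrow> 'o \<Rightarrow> bool" where
  "proto_complete C X \<longleftrightarrow>
     (\<forall>m. protosplit_mono C m \<and> Dom C m = X \<longrightarrow> split_mono C m)"

definition complete :: "('o, 'a) cat \<Rightarrow> 'o \<Rightarrow> bool" where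
  "complete C X \<longleftrightarrow>
     (\<forall>m. normal_mono C m \<and> Dom C m = X \<longrightarrow> split_mono C m)"

definition complete_star :: "('o, 'a) cat \<Rightarrow> 'o \<Rightarrow> bool" where
  "complete_star C X \<longleftrightarrow>
     (\<forall>m. bourn_normal C m \<and> Dom C m = X \<longrightarrow> split_mono C m)"

definition strong_complete :: "('o, 'a) cat \<Rightarrow> 'o \<Rightarrow> bool" where
  "strong_complete C X \<longleftrightarrow>
     (\<forall>m. protosplit_mono C m \<and> Dom C m = X \<longrightarrow>
        (\<exists>!r. r \<in> hom C (Cod C m) X \<and> Comp C r m = Idm C X))"

end

(* Let m : X -> Y be Bourn-normal, witnessed by the relation (R, r1, r2) and mt : X x X -> R.
   The injection i2 = <0, 1> : X -> X x X is a kernel of the split epimorphism p1, and because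
   the square r1 mt = m p1 is a pullback, mt i2 is a kernel of r1, which is split by the
   reflexivity d : Y -> R.  For X strong-complete, a retraction rho of mt i2 makes rho mt a
   retraction of i2, so rho mt = p2 by uniqueness; as d m = mt <1, 1>, rho d is a retraction of m.
   A kernel m of f is Bourn-normal for the kernel pair of f, and a protosplit monomorphism is
   normal. *)
theory Submission
  imports Defs
begin

locale Cat =
  fixes C :: "('o, 'a) cat"
  assumes category: "category C"
begin

abbreviation comp_arr :: "'a \<Rightarrow> 'a \<Rightarrow> 'a" (infixr \<open>\<cdot>\<close> 55)
  where "g \<cdot> f \<equiv> Comp C g f"

lemma hom_objs:
  assumes "f \<in> hom C A B"
  shows "A \<in> Obj C" "B \<in> Obj C"
  using assms category unfolding category_def hom_def by auto

lemma comp_in_hom: "f \<in> hom C A B \<Longrightarrow> g \<in> hom C B D \<Longrightarrow> g \<cdot> f \<in> hom C A D"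
  using category unfolding category_def hom_def by auto

lemma comp_assoc:
  "f \<in> hom C A B \<Longrightarrow> g \<in> hom C B D \<Longrightarrow> h \<in> hom C D E \<Longrightarrow> h \<cdot> (g \<cdot> f) = (h \<cdot> g) \<cdot> f"
  using category unfolding category_def hom_def by auto

lemma id_in_hom: "A \<in> Obj C \<Longrightarrow> Idm C A \<in> hom C A A"
  using category unfolding category_def by auto

lemma comp_id_left: "f \<in> hom C A B \<Longrightarrow> Idm C B \<cdot> f = f"
  using category unfolding category_def hom_def by auto

lemma comp_id_right: "f \<in> hom C A B \<Longrightarrow> f \<cdot> Idm C A = f"
  using category unfolding category_def hom_def by auto

subsection \<open>Zero morphisms\<close>

lemma zero_mor_comp_right:
  assumes f: "f \<in> hom C B D" "zero_mor C f" and g: "g \<in> hom C A B"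
  shows "zero_mor C (f \<cdot> g)"
proof -
  obtain Z a b where Z: "zero_obj C Z" and a: "a \<in> hom C B Z" and b: "b \<in> hom C Z D"
    and f_eq: "f = b \<cdot> a"
    using f unfolding zero_mor_def hom_def by auto
  have "f \<cdot> g = b \<cdot> (a \<cdot> g)"
    using f_eq comp_assoc[OF g a b] by simp
  then show ?thesis
    unfolding zero_mor_def using Z comp_in_hom[OF g a] b comp_in_hom[OF g f(1)]
    by (auto simp: hom_def)
qed

lemma zero_mor_comp_left:
  assumes f: "f \<in> hom C A B" "zero_mor C f" and g: "g \<in> hom C B D"
  shows "zero_mor C (g \<cdot> f)"
proof -
  obtain Z a b where Z: "zero_obj C Z" and a: "a \<in> hom C A Z" and b: "b \<in> hom C Z B"
    and f_eq: "f = b \<cdot> a"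
    using f unfolding zero_mor_def hom_def by auto
  have "g \<cdot> f = (g \<cdot> b) \<cdot> a"
    using f_eq comp_assoc[OF a b g] by simp
  then show ?thesis
    unfolding zero_mor_def using Z a comp_in_hom[OF b g] comp_in_hom[OF f(1) g]
    by (auto simp: hom_def)
qed

text \<open>Any two zero objects are joined by a unique arrow, through which both factorisations pass.\<close>
lemma zero_mor_unique:
  assumes a: "a \<in> hom C A B" "zero_mor C a" and b: "b \<in> hom C A B" "zero_mor C b"
  shows "a = b"
proof -
  obtain Z g h where Z: "zero_obj C Z" and g: "g \<in> hom C A Z" and h: "h \<in> hom C Z B"
    and a_eq: "a = h \<cdot> g"
    using a unfolding zero_mor_def hom_def by auto
  obtain Z' g' h' where Z': "zero_obj C Z'" and g': "g' \<in> hom C A Z'" and h': "h' \<in> hom C Z' B"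
    and b_eq: "b = h' \<cdot> g'"
    using b unfolding zero_mor_def hom_def by auto
  obtain i where i: "i \<in> hom C Z Z'"
    using Z hom_objs(1)[OF h'] unfolding zero_obj_def initial_obj_def by blast
  have "g' = i \<cdot> g"
    using Z' hom_objs(1)[OF g] g' comp_in_hom[OF g i]
    unfolding zero_obj_def terminal_obj_def by blast
  moreover have "h = h' \<cdot> i"
    using Z hom_objs(2)[OF h] h comp_in_hom[OF i h']
    unfolding zero_obj_def initial_obj_def by blast
  ultimately show ?thesis
    using a_eq b_eq comp_assoc[OF g i h'] by simp
qed

subsection \<open>Universal properties\<close>

lemma pullback_data:
  assumes "is_pullback C f g p q"
  shows "p \<in> hom C (Dom C p) (Dom C f)" "q \<in> hom C (Dom C p) (Dom C g)"
    "f \<in> hom C (Dom C f) (Cod C f)" "g \<in> hom C (Dom C g) (Cod C f)" "f \<cdot> p = g \<cdot> q"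
  using assms unfolding is_pullback_def hom_def by auto

lemma pullback_univ:
  assumes "is_pullback C f g p q" "u \<in> hom C T (Dom C f)" "v \<in> hom C T (Dom C g)"
    "f \<cdot> u = g \<cdot> v"
  shows "\<exists>!h. h \<in> hom C T (Dom C p) \<and> p \<cdot> h = u \<and> q \<cdot> h = v"
proof -
  have "\<forall>u \<in> Arr C. \<forall>v \<in> Arr C. Dom C u = Dom C v \<and> Cod C u = Dom C f \<and> Cod C v = Dom C g \<and>
      f \<cdot> u = g \<cdot> v \<longrightarrow> (\<exists>!h. h \<in> hom C (Dom C u) (Dom C p) \<and> p \<cdot> h = u \<and> q \<cdot> h = v)"
    using assms(1) unfolding is_pullback_def by blast
  from this[rule_format, of u v] show ?thesis
    using assms(2-4) by (simp add: hom_def)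
qed

lemma pullback_factor:
  assumes "is_pullback C f g p q" "u \<in> hom C T (Dom C f)" "v \<in> hom C T (Dom C g)"
    "f \<cdot> u = g \<cdot> v"
  obtains h where "h \<in> hom C T (Dom C p)" "p \<cdot> h = u" "q \<cdot> h = v"
  using pullback_univ[OF assms] by blast

lemma pullback_jointly_monic:
  assumes pb: "is_pullback C f g p q"
    and h: "h \<in> hom C T (Dom C p)" "h' \<in> hom C T (Dom C p)"
    and eq: "p \<cdot> h = p \<cdot> h'" "q \<cdot> h = q \<cdot> h'"
  shows "h = h'"
proof -
  note d = pullback_data[OF pb]
  have "f \<cdot> (p \<cdot> h) = g \<cdot> (q \<cdot> h)"
    using comp_assoc[OF h(1) d(1) d(3)] comp_assoc[OF h(1) d(2) d(4)] d(5) by simp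
  from pullback_univ[OF pb comp_in_hom[OF h(1) d(1)] comp_in_hom[OF h(1) d(2)] this]
  show ?thesis using h eq by metis
qed

lemma is_pullbackI:
  assumes f: "f \<in> hom C A Z" and g: "g \<in> hom C B Z"
    and p: "p \<in> hom C P A" and q: "q \<in> hom C P B" and square: "f \<cdot> p = g \<cdot> q"
    and factor: "\<And>u v T. u \<in> hom C T A \<Longrightarrow> v \<in> hom C T B \<Longrightarrow> f \<cdot> u = g \<cdot> v \<Longrightarrow>
       \<exists>h \<in> hom C T P. p \<cdot> h = u \<and> q \<cdot> h = v"
    and monic: "\<And>h h' T. h \<in> hom C T P \<Longrightarrow> h' \<in> hom C T P \<Longrightarrow> p \<cdot> h = p \<cdot> h' \<Longrightarrow>
       q \<cdot> h = q \<cdot> h' \<Longrightarrow> h = h'"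
  shows "is_pullback C f g p q"
  unfolding is_pullback_def
proof (intro conjI ballI impI)
  fix u v assume "u \<in> Arr C" "v \<in> Arr C"
    and "Dom C u = Dom C v \<and> Cod C u = Dom C f \<and> Cod C v = Dom C g \<and> f \<cdot> u = g \<cdot> v"
  then have "u \<in> hom C (Dom C u) A" "v \<in> hom C (Dom C u) B" "f \<cdot> u = g \<cdot> v"
    using f g by (auto simp: hom_def)
  then obtain h where h: "h \<in> hom C (Dom C u) P" "p \<cdot> h = u" "q \<cdot> h = v"
    using factor by blast
  have "Dom C p = P"
    using p by (simp add: hom_def)
  then show "\<exists>!h. h \<in> hom C (Dom C u) (Dom C p) \<and> p \<cdot> h = u \<and> q \<cdot> h = v"
    using h by (auto intro!: ex1I[of _ h] monic)
qed (use f g p q square in \<open>simp_all add: hom_def\<close>)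

lemma product_data:
  assumes "is_product C A B p q"
  shows "p \<in> hom C (Dom C p) A" "q \<in> hom C (Dom C p) B"
  using assms unfolding is_product_def hom_def by auto

lemma product_univ:
  assumes "is_product C A B p q" "u \<in> hom C T A" "v \<in> hom C T B"
  shows "\<exists>!h. h \<in> hom C T (Dom C p) \<and> p \<cdot> h = u \<and> q \<cdot> h = v"
proof -
  have "\<forall>u \<in> Arr C. \<forall>v \<in> Arr C. Dom C u = Dom C v \<and> Cod C u = A \<and> Cod C v = B \<longrightarrow>
      (\<exists>!h. h \<in> hom C (Dom C u) (Dom C p) \<and> p \<cdot> h = u \<and> q \<cdot> h = v)"
    using assms(1) unfolding is_product_def by blast
  from this[rule_format, of u v] show ?thesis
    using assms(2,3) by (simp add: hom_def)
qed

lemma product_factor: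
  assumes "is_product C A B p q" "u \<in> hom C T A" "v \<in> hom C T B"
  obtains h where "h \<in> hom C T (Dom C p)" "p \<cdot> h = u" "q \<cdot> h = v"
  using product_univ[OF assms] by blast

lemma product_jointly_monic:
  assumes pr: "is_product C A B p q"
    and h: "h \<in> hom C T (Dom C p)" "h' \<in> hom C T (Dom C p)"
    and eq: "p \<cdot> h = p \<cdot> h'" "q \<cdot> h = q \<cdot> h'"
  shows "h = h'"
proof -
  note d = product_data[OF pr]
  from product_univ[OF pr comp_in_hom[OF h(1) d(1)] comp_in_hom[OF h(1) d(2)]]
  show ?thesis using h eq by metis
qed

lemma pullback_over_terminal_is_product:
  assumes T: "terminal_obj C T" and a: "a \<in> hom C A T" and b: "b \<in> hom C B T"
    and pb: "is_pullback C a b p q"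
  shows "is_product C A B p q"
  unfolding is_product_def
proof (intro conjI ballI impI)
  fix u v assume "u \<in> Arr C" "v \<in> Arr C" "Dom C u = Dom C v \<and> Cod C u = A \<and> Cod C v = B"
  then have u: "u \<in> hom C (Dom C u) A" and v: "v \<in> hom C (Dom C u) B"
    by (auto simp: hom_def)
  have "a \<cdot> u = b \<cdot> v"
    using T hom_objs(1)[OF u] comp_in_hom[OF u a] comp_in_hom[OF v b]
    unfolding terminal_obj_def by blast
  then show "\<exists>!h. h \<in> hom C (Dom C u) (Dom C p) \<and> p \<cdot> h = u \<and> q \<cdot> h = v"
    using pullback_univ[OF pb] u v a b by (simp add: hom_def)
qed (use pullback_data[OF pb] a b hom_objs[OF a] hom_objs[OF b] in \<open>simp_all add: hom_def\<close>)

lemma product_exists: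
  assumes "has_finite_limits C" "A \<in> Obj C" "B \<in> Obj C"
  obtains p q where "is_product C A B p q"
proof -
  obtain T where T: "terminal_obj C T"
    using assms(1) unfolding has_finite_limits_def by auto
  obtain a b where a: "a \<in> hom C A T" and b: "b \<in> hom C B T"
    using T assms(2,3) unfolding terminal_obj_def by blast
  have "\<forall>f \<in> Arr C. \<forall>g \<in> Arr C. Cod C f = Cod C g \<longrightarrow> (\<exists>p q. is_pullback C f g p q)"
    using assms(1) unfolding has_finite_limits_def by blast
  moreover have "a \<in> Arr C" "b \<in> Arr C" "Cod C a = Cod C b"
    using a b by (auto simp: hom_def)
  ultimately obtain p q where "is_pullback C a b p q"
    by blast
  then show ?thesis
    using that pullback_over_terminal_is_product[OF T a b] by blast
qed

lemma kernel_data: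
  assumes "is_kernel C k f"
  shows "k \<in> hom C (Dom C k) (Dom C f)" "f \<in> hom C (Dom C f) (Cod C f)" "zero_mor C (f \<cdot> k)"
  using assms unfolding is_kernel_def hom_def by auto

lemma kernel_univ:
  assumes "is_kernel C k f" "g \<in> hom C T (Dom C f)" "zero_mor C (f \<cdot> g)"
  shows "\<exists>!h. h \<in> hom C T (Dom C k) \<and> k \<cdot> h = g"
proof -
  have "\<forall>g \<in> Arr C. Cod C g = Dom C f \<and> zero_mor C (f \<cdot> g) \<longrightarrow>
      (\<exists>!h. h \<in> hom C (Dom C g) (Dom C k) \<and> k \<cdot> h = g)"
    using assms(1) unfolding is_kernel_def by blast
  from this[rule_format, of g] show ?thesis
    using assms(2,3) by (simp add: hom_def)
qed

lemma kernel_factor: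
  assumes "is_kernel C k f" "g \<in> hom C T (Dom C f)" "zero_mor C (f \<cdot> g)"
  obtains h where "h \<in> hom C T (Dom C k)" "k \<cdot> h = g"
  using kernel_univ[OF assms] by blast

lemma kernel_cancel:
  assumes ker: "is_kernel C k f"
    and h: "h \<in> hom C T (Dom C k)" "h' \<in> hom C T (Dom C k)" and eq: "k \<cdot> h = k \<cdot> h'"
  shows "h = h'"
proof -
  note d = kernel_data[OF ker]
  have "zero_mor C ((f \<cdot> k) \<cdot> h)"
    using zero_mor_comp_right[OF comp_in_hom[OF d(1,2)] d(3) h(1)] .
  then have "zero_mor C (f \<cdot> (k \<cdot> h))"
    using comp_assoc[OF h(1) d(1,2)] by simp
  from kernel_univ[OF ker comp_in_hom[OF h(1) d(1)] this]
  show ?thesis using h eq by metis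
qed

lemma kernel_mono:
  assumes "is_kernel C k f"
  shows "mono C k"
  unfolding mono_def
proof (intro conjI ballI impI)
  show "k \<in> Arr C"
    using kernel_data(1)[OF assms] by (simp add: hom_def)
  fix a b assume "a \<in> Arr C" "b \<in> Arr C"
    and "Cod C a = Dom C k \<and> Cod C b = Dom C k \<and> Dom C a = Dom C b \<and> k \<cdot> a = k \<cdot> b"
  then show "a = b"
    using kernel_cancel[OF assms, of a "Dom C a" b] by (simp add: hom_def)
qed

lemma is_kernelI:
  assumes k: "k \<in> hom C K A" and f: "f \<in> hom C A B" and zero: "zero_mor C (f \<cdot> k)"
    and factor: "\<And>g T. g \<in> hom C T A \<Longrightarrow> zero_mor C (f \<cdot> g) \<Longrightarrow> \<exists>h \<in> hom C T K. k \<cdot> h = g"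
    and cancel: "\<And>h h' T. h \<in> hom C T K \<Longrightarrow> h' \<in> hom C T K \<Longrightarrow> k \<cdot> h = k \<cdot> h' \<Longrightarrow> h = h'"
  shows "is_kernel C k f"
  unfolding is_kernel_def
proof (intro conjI ballI impI)
  fix g assume "g \<in> Arr C" "Cod C g = Dom C f \<and> zero_mor C (f \<cdot> g)"
  then have "g \<in> hom C (Dom C g) A" "zero_mor C (f \<cdot> g)"
    using f by (auto simp: hom_def)
  then obtain h where h: "h \<in> hom C (Dom C g) K" "k \<cdot> h = g"
    using factor by blast
  have "Dom C k = K"
    using k by (simp add: hom_def)
  then show "\<exists>!h. h \<in> hom C (Dom C g) (Dom C k) \<and> k \<cdot> h = g"
    using h by (auto intro!: ex1I[of _ h] cancel)
qed (use k f zero in \<open>simp_all add: hom_def\<close>)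

subsection \<open>Kernel pairs and normal monomorphisms\<close>

lemma equiv_rel_jointly_monic:
  assumes "equiv_rel C Y R r1 r2" "h \<in> hom C T R" "h' \<in> hom C T R"
    "r1 \<cdot> h = r1 \<cdot> h'" "r2 \<cdot> h = r2 \<cdot> h'"
  shows "h = h'"
proof -
  have "\<forall>a \<in> Arr C. \<forall>b \<in> Arr C. Cod C a = R \<and> Cod C b = R \<and> Dom C a = Dom C b \<and>
      r1 \<cdot> a = r1 \<cdot> b \<and> r2 \<cdot> a = r2 \<cdot> b \<longrightarrow> a = b"
    using assms(1) unfolding equiv_rel_def by blast
  from this[rule_format, of h h'] show ?thesis
    using assms(2-5) by (simp add: hom_def)
qed

lemma equiv_rel_split_epi: "equiv_rel C Y R r1 r2 \<Longrightarrow> split_epi C r1"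
  unfolding equiv_rel_def split_epi_def hom_def by auto

lemma kernel_pair_equiv_rel:
  assumes kp: "is_pullback C f f r1 r2"
  shows "equiv_rel C (Dom C f) (Dom C r1) r1 r2"
proof -
  define Y R where "Y = Dom C f" and "R = Dom C r1"
  have r1: "r1 \<in> hom C R Y" and r2: "r2 \<in> hom C R Y" and f: "f \<in> hom C Y (Cod C f)"
    and fr: "f \<cdot> r1 = f \<cdot> r2"
    using pullback_data[OF kp] unfolding Y_def R_def by auto
  have jointly_monic: "a = b" if "a \<in> Arr C" "b \<in> Arr C"
    "Cod C a = R \<and> Cod C b = R \<and> Dom C a = Dom C b \<and> r1 \<cdot> a = r1 \<cdot> b \<and> r2 \<cdot> a = r2 \<cdot> b"
    for a b
    using that pullback_jointly_monic[OF kp, of a "Dom C a" b] unfolding R_def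
    by (simp add: hom_def)
  obtain d where "d \<in> hom C Y R" "r1 \<cdot> d = Idm C Y" "r2 \<cdot> d = Idm C Y"
    using pullback_factor[OF kp] id_in_hom[OF hom_objs(2)[OF r1]] unfolding Y_def R_def
    by metis
  then have reflexive: "\<exists>d \<in> hom C Y R. r1 \<cdot> d = Idm C Y \<and> r2 \<cdot> d = Idm C Y"
    by blast
  obtain \<sigma> where "\<sigma> \<in> hom C R R" "r1 \<cdot> \<sigma> = r2" "r2 \<cdot> \<sigma> = r1"
    using pullback_factor[OF kp] r1 r2 fr unfolding Y_def R_def by metis
  then have symmetric: "\<exists>\<sigma> \<in> hom C R R. r1 \<cdot> \<sigma> = r2 \<and> r2 \<cdot> \<sigma> = r1"
    by blast
  have transitive: "\<exists>\<tau> \<in> hom C (Dom C q1) R. r1 \<cdot> \<tau> = r1 \<cdot> q1 \<and> r2 \<cdot> \<tau> = r2 \<cdot> q2"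
    if tp: "is_pullback C r2 r1 q1 q2" for q1 q2
  proof -
    define Q where "Q = Dom C q1"
    have q1: "q1 \<in> hom C Q R" and q2: "q2 \<in> hom C Q R" and sq: "r2 \<cdot> q1 = r1 \<cdot> q2"
      using pullback_data[OF tp] r2 unfolding Q_def R_def by (auto simp: hom_def)
    have "f \<cdot> (r1 \<cdot> q1) = (f \<cdot> r2) \<cdot> q1"
      using comp_assoc[OF q1 r1 f] fr by simp
    also have "\<dots> = (f \<cdot> r1) \<cdot> q2"
      using comp_assoc[OF q1 r2 f] comp_assoc[OF q2 r1 f] sq by simp
    also have "\<dots> = f \<cdot> (r2 \<cdot> q2)"
      using comp_assoc[OF q2 r2 f] fr by simp
    finally obtain \<tau> where "\<tau> \<in> hom C Q R" "r1 \<cdot> \<tau> = r1 \<cdot> q1" "r2 \<cdot> \<tau> = r2 \<cdot> q2"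
      using pullback_factor[OF kp, folded Y_def R_def, OF comp_in_hom[OF q1 r1] comp_in_hom[OF q2 r2]]
      by metis
    then show ?thesis
      unfolding Q_def by blast
  qed
  show ?thesis
    unfolding equiv_rel_def Y_def[symmetric] R_def[symmetric]
    using r1 r2 hom_objs[OF r1] jointly_monic reflexive symmetric transitive
    by blast
qed

text \<open>Elementwise: if \<open>f y1 = f y2\<close> and \<open>y1\<close> lies in the kernel of \<open>f\<close>, so does \<open>y2\<close>.\<close>
lemma kernel_pair_restriction_is_pullback:
  assumes ker: "is_kernel C m f" and kp: "is_pullback C f f r1 r2"
    and pr: "is_product C (Dom C m) (Dom C m) p1 p2"
    and mt: "mt \<in> hom C (Dom C p1) (Dom C r1)" and mt1: "r1 \<cdot> mt = m \<cdot> p1" and mt2: "r2 \<cdot> mt = m \<cdot> p2"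
  shows "is_pullback C r1 m mt p1"
proof -
  define X Y R P where "X = Dom C m" and "Y = Dom C f" and "R = Dom C r1" and "P = Dom C p1"
  note pr = pr[folded X_def]
  have m: "m \<in> hom C X Y" and f: "f \<in> hom C Y (Cod C f)" and fm: "zero_mor C (f \<cdot> m)"
    using kernel_data[OF ker] unfolding X_def Y_def by auto
  have r1: "r1 \<in> hom C R Y" and r2: "r2 \<in> hom C R Y" and fr: "f \<cdot> r1 = f \<cdot> r2"
    using pullback_data[OF kp] unfolding Y_def R_def by auto
  have p1: "p1 \<in> hom C P X" and p2: "p2 \<in> hom C P X"
    using product_data[OF pr] unfolding X_def P_def by auto
  have mt: "mt \<in> hom C P R"
    using mt unfolding P_def R_def .
  show ?thesis
  proof (rule is_pullbackI[OF r1 m mt p1 mt1])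
    fix u v T assume u: "u \<in> hom C T R" and v: "v \<in> hom C T X" and sq: "r1 \<cdot> u = m \<cdot> v"
    have "f \<cdot> (r2 \<cdot> u) = (f \<cdot> r1) \<cdot> u"
      using comp_assoc[OF u r2 f] fr by simp
    also have "\<dots> = (f \<cdot> m) \<cdot> v"
      using comp_assoc[OF u r1 f] comp_assoc[OF v m f] sq by simp
    finally have "zero_mor C (f \<cdot> (r2 \<cdot> u))"
      using zero_mor_comp_right[OF comp_in_hom[OF m f] fm v] by simp
    then obtain w where w: "w \<in> hom C T X" "m \<cdot> w = r2 \<cdot> u"
      using kernel_factor[OF ker, folded X_def Y_def, OF comp_in_hom[OF u r2]] by metis
    obtain h where h: "h \<in> hom C T P" "p1 \<cdot> h = v" "p2 \<cdot> h = w"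
      using product_factor[OF pr v w(1), folded P_def] by metis
    have "mt \<cdot> h = u"
    proof (rule pullback_jointly_monic[OF kp])
      show "mt \<cdot> h \<in> hom C T (Dom C r1)" "u \<in> hom C T (Dom C r1)"
        using comp_in_hom[OF h(1) mt] u unfolding R_def by auto
      show "r1 \<cdot> (mt \<cdot> h) = r1 \<cdot> u"
        using comp_assoc[OF h(1) mt r1] comp_assoc[OF h(1) p1 m] mt1 h(2) sq by simp
      show "r2 \<cdot> (mt \<cdot> h) = r2 \<cdot> u"
        using comp_assoc[OF h(1) mt r2] comp_assoc[OF h(1) p2 m] mt2 h(3) w(2) by simp
    qed
    then show "\<exists>h \<in> hom C T P. mt \<cdot> h = u \<and> p1 \<cdot> h = v"
      using h by blast
  next
    fix h h' T assume h: "h \<in> hom C T P" "h' \<in> hom C T P"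
      and eq: "mt \<cdot> h = mt \<cdot> h'" "p1 \<cdot> h = p1 \<cdot> h'"
    have "m \<cdot> (p2 \<cdot> h) = r2 \<cdot> (mt \<cdot> h)" "m \<cdot> (p2 \<cdot> h') = r2 \<cdot> (mt \<cdot> h')"
      using comp_assoc[OF h(1) p2 m] comp_assoc[OF h(1) mt r2]
        comp_assoc[OF h(2) p2 m] comp_assoc[OF h(2) mt r2] mt2 by simp_all
    then have "p2 \<cdot> h = p2 \<cdot> h'"
      using kernel_cancel[OF ker] comp_in_hom[OF h(1) p2] comp_in_hom[OF h(2) p2] eq(1)
      unfolding X_def by simp
    then show "h = h'"
      using product_jointly_monic[OF pr] h eq(2) unfolding P_def by blast
  qed
qed

lemma kernel_imp_bourn_normal:
  assumes "has_finite_limits C" and ker: "is_kernel C m f"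
  shows "bourn_normal C m"
proof -
  define X Y where "X = Dom C m" and "Y = Dom C f"
  have m: "m \<in> hom C X Y" and f: "f \<in> hom C Y (Cod C f)" and fm: "zero_mor C (f \<cdot> m)"
    using kernel_data[OF ker] unfolding X_def Y_def by auto
  obtain r1 r2 where kp: "is_pullback C f f r1 r2"
    using assms(1) f unfolding has_finite_limits_def hom_def by blast
  obtain p1 p2 where pr: "is_product C X X p1 p2"
    using product_exists[OF assms(1) hom_objs(1)[OF m] hom_objs(1)[OF m]] .
  have p1: "p1 \<in> hom C (Dom C p1) X" and p2: "p2 \<in> hom C (Dom C p1) X"
    using product_data[OF pr] by auto
  have "zero_mor C (f \<cdot> (m \<cdot> p))" if "p \<in> hom C (Dom C p1) X" for p
    using zero_mor_comp_right[OF comp_in_hom[OF m f] fm that] comp_assoc[OF that m f] by simp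
  then have "f \<cdot> (m \<cdot> p1) = f \<cdot> (m \<cdot> p2)"
    using zero_mor_unique comp_in_hom[OF comp_in_hom[OF p1 m] f] comp_in_hom[OF comp_in_hom[OF p2 m] f]
      p1 p2 by blast
  then obtain mt where mt: "mt \<in> hom C (Dom C p1) (Dom C r1)" "r1 \<cdot> mt = m \<cdot> p1" "r2 \<cdot> mt = m \<cdot> p2"
    using pullback_factor[OF kp, folded Y_def, OF comp_in_hom[OF p1 m] comp_in_hom[OF p2 m]] by metis
  have "is_pullback C r1 m mt p1"
    using kernel_pair_restriction_is_pullback[OF ker kp pr[unfolded X_def] mt] .
  moreover have "equiv_rel C (Cod C m) (Dom C r1) r1 r2"
    using kernel_pair_equiv_rel[OF kp] m unfolding Y_def by (simp add: hom_def)
  ultimately show ?thesis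
    unfolding bourn_normal_def using kernel_mono[OF ker] pr mt unfolding X_def by blast
qed

lemma complete_star_imp_complete:
  assumes "has_finite_limits C" "complete_star C X"
  shows "complete C X"
  using assms kernel_imp_bourn_normal[OF assms(1)]
  unfolding complete_star_def complete_def normal_mono_def by blast

lemma bourn_normal_retraction:
  assumes m: "m \<in> hom C X Y" and er: "equiv_rel C Y R r1 r2" and pr: "is_product C X X p1 p2"
    and mt: "mt \<in> hom C (Dom C p1) R" and mt1: "r1 \<cdot> mt = m \<cdot> p1" and mt2: "r2 \<cdot> mt = m \<cdot> p2"
    and \<rho>: "\<rho> \<in> hom C R X" and \<rho>_mt: "\<rho> \<cdot> mt = p2"
  shows "split_mono C m"
proof -
  define P where "P = Dom C p1"
  note mt = mt[folded P_def]
  have p1: "p1 \<in> hom C P X" and p2: "p2 \<in> hom C P X"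
    using product_data[OF pr] unfolding P_def by auto
  have r1: "r1 \<in> hom C R Y" and r2: "r2 \<in> hom C R Y"
    using er unfolding equiv_rel_def by auto
  obtain d where d: "d \<in> hom C Y R" "r1 \<cdot> d = Idm C Y" "r2 \<cdot> d = Idm C Y"
    using er unfolding equiv_rel_def by blast
  obtain \<delta> where \<delta>: "\<delta> \<in> hom C X P" "p1 \<cdot> \<delta> = Idm C X" "p2 \<cdot> \<delta> = Idm C X"
    using product_factor[OF pr id_in_hom[OF hom_objs(1)[OF m]] id_in_hom[OF hom_objs(1)[OF m]],
        folded P_def]
    by metis
  have "d \<cdot> m = mt \<cdot> \<delta>"
  proof (rule equiv_rel_jointly_monic[OF er comp_in_hom[OF m d(1)] comp_in_hom[OF \<delta>(1) mt]])
    show "r1 \<cdot> (d \<cdot> m) = r1 \<cdot> (mt \<cdot> \<delta>)"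
      using comp_assoc[OF m d(1) r1] comp_assoc[OF \<delta>(1) mt r1] comp_assoc[OF \<delta>(1) p1 m]
        d(2) mt1 \<delta>(2) comp_id_left[OF m] comp_id_right[OF m] by simp
    show "r2 \<cdot> (d \<cdot> m) = r2 \<cdot> (mt \<cdot> \<delta>)"
      using comp_assoc[OF m d(1) r2] comp_assoc[OF \<delta>(1) mt r2] comp_assoc[OF \<delta>(1) p2 m]
        d(3) mt2 \<delta>(3) comp_id_left[OF m] comp_id_right[OF m] by simp
  qed
  then have "(\<rho> \<cdot> d) \<cdot> m = Idm C X"
    using comp_assoc[OF m d(1) \<rho>] comp_assoc[OF \<delta>(1) mt \<rho>] \<rho>_mt \<delta>(3) by simp
  then show ?thesis
    unfolding split_mono_def using m comp_in_hom[OF d(1) \<rho>] by (auto simp: hom_def)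
qed

end

locale pointed_cat = Cat +
  assumes pointed: "pointed C"
begin

lemma ex_zero_mor:
  assumes "A \<in> Obj C" "B \<in> Obj C"
  obtains z where "z \<in> hom C A B" "zero_mor C z"
proof -
  obtain Z where Z: "zero_obj C Z"
    using pointed unfolding pointed_def by auto
  obtain g h where g: "g \<in> hom C A Z" and h: "h \<in> hom C Z B"
    using Z assms unfolding zero_obj_def terminal_obj_def initial_obj_def by blast
  have "zero_mor C (h \<cdot> g)"
    unfolding zero_mor_def using Z g h comp_in_hom[OF g h] by (auto simp: hom_def)
  then show ?thesis
    using that comp_in_hom[OF g h] by blast
qed

lemma product_proj_split_epi:
  assumes pr: "is_product C A B p q"
  shows "split_epi C p"
proof -
  have A: "A \<in> Obj C" and B: "B \<in> Obj C" and p: "p \<in> hom C (Dom C p) A"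
    using pr product_data(1)[OF pr] unfolding is_product_def by auto
  obtain z where z: "z \<in> hom C A B"
    using ex_zero_mor[OF A B] by metis
  obtain s where "s \<in> hom C A (Dom C p)" "p \<cdot> s = Idm C A"
    using product_factor[OF pr id_in_hom[OF A] z] by metis
  then show ?thesis
    unfolding split_epi_def using p by (auto simp: hom_def)
qed

lemma product_injection_kernel:
  assumes pr: "is_product C A B p q" and i: "i \<in> hom C B (Dom C p)"
    and pi: "zero_mor C (p \<cdot> i)" and qi: "q \<cdot> i = Idm C B"
  shows "is_kernel C i p"
proof -
  define P where "P = Dom C p"
  note pr_monic = product_jointly_monic[OF pr, folded P_def]
  have p: "p \<in> hom C P A" and q: "q \<in> hom C P B" and i: "i \<in> hom C B P"
    using product_data[OF pr] i unfolding P_def by auto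
  have cancel: "a = b" if a: "a \<in> hom C T B" and b: "b \<in> hom C T B" and "i \<cdot> a = i \<cdot> b" for a b T
  proof -
    have "a = (q \<cdot> i) \<cdot> a"
      using qi comp_id_left[OF a] by simp
    also have "\<dots> = (q \<cdot> i) \<cdot> b"
      using comp_assoc[OF a i q] comp_assoc[OF b i q] \<open>i \<cdot> a = i \<cdot> b\<close> by simp
    also have "\<dots> = b"
      using qi comp_id_left[OF b] by simp
    finally show ?thesis .
  qed
  show ?thesis
  proof (rule is_kernelI[OF i p pi _ cancel])
    fix g T assume g: "g \<in> hom C T P" and pg: "zero_mor C (p \<cdot> g)"
    have "p \<cdot> (i \<cdot> (q \<cdot> g)) = p \<cdot> g"
    proof (rule zero_mor_unique)
      show "p \<cdot> (i \<cdot> (q \<cdot> g)) \<in> hom C T A" "p \<cdot> g \<in> hom C T A"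
        using comp_in_hom[OF comp_in_hom[OF comp_in_hom[OF g q] i] p] comp_in_hom[OF g p] .
      show "zero_mor C (p \<cdot> (i \<cdot> (q \<cdot> g)))"
        using zero_mor_comp_right[OF comp_in_hom[OF i p] pi comp_in_hom[OF g q]]
          comp_assoc[OF comp_in_hom[OF g q] i p] by simp
    qed (use pg in simp)
    moreover have "q \<cdot> (i \<cdot> (q \<cdot> g)) = q \<cdot> g"
      using comp_assoc[OF comp_in_hom[OF g q] i q] qi comp_id_left[OF comp_in_hom[OF g q]] by simp
    ultimately have "i \<cdot> (q \<cdot> g) = g"
      using pr_monic[OF comp_in_hom[OF comp_in_hom[OF g q] i] g] by simp
    then show "\<exists>h \<in> hom C T B. i \<cdot> h = g"
      using comp_in_hom[OF g q] by blast
  qed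
qed

lemma kernel_pullback_comp:
  assumes pb: "is_pullback C f g p q" and ker: "is_kernel C k q"
  shows "is_kernel C (p \<cdot> k) f"
proof -
  define P A B Z K where "P = Dom C p" and "A = Dom C f" and "B = Dom C g" and "Z = Cod C f"
    and "K = Dom C k"
  note pb_factor = pullback_factor[OF pb, folded P_def A_def B_def]
  note pb_monic = pullback_jointly_monic[OF pb, folded P_def]
  have p: "p \<in> hom C P A" and q: "q \<in> hom C P B" and f: "f \<in> hom C A Z" and g: "g \<in> hom C B Z"
    and sq: "f \<cdot> p = g \<cdot> q"
    using pullback_data[OF pb] unfolding P_def A_def B_def Z_def by auto
  have k: "k \<in> hom C K P" and qk: "zero_mor C (q \<cdot> k)"
    using kernel_data[OF ker] q unfolding K_def by (auto simp: hom_def)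
  have "Dom C q = P"
    using q by (simp add: hom_def)
  note k_factor = kernel_factor[OF ker, unfolded this, folded K_def]
  have q_zero: "zero_mor C (q \<cdot> (k \<cdot> a))" if a: "a \<in> hom C T K" for a T
    using zero_mor_comp_right[OF comp_in_hom[OF k q] qk a] comp_assoc[OF a k q] by simp
  show ?thesis
  proof (rule is_kernelI[OF comp_in_hom[OF k p] f])
    show "zero_mor C (f \<cdot> (p \<cdot> k))"
      using zero_mor_comp_left[OF comp_in_hom[OF k q] qk g] comp_assoc[OF k p f]
        comp_assoc[OF k q g] sq by simp
  next
    fix u T assume u: "u \<in> hom C T A" and fu: "zero_mor C (f \<cdot> u)"
    obtain z where z: "z \<in> hom C T B" "zero_mor C z"
      using ex_zero_mor[OF hom_objs(1)[OF u] hom_objs(1)[OF g]] .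
    have "f \<cdot> u = g \<cdot> z"
      using zero_mor_unique[OF comp_in_hom[OF u f] fu comp_in_hom[OF z(1) g]
          zero_mor_comp_left[OF z g]] .
    then obtain h where h: "h \<in> hom C T P" "p \<cdot> h = u" "q \<cdot> h = z"
      using pb_factor[OF u z(1)] by metis
    moreover have "zero_mor C (q \<cdot> h)"
      using h(3) z(2) by simp
    ultimately obtain h' where h': "h' \<in> hom C T K" "k \<cdot> h' = h"
      using k_factor by metis
    then show "\<exists>h \<in> hom C T K. (p \<cdot> k) \<cdot> h = u"
      using comp_assoc[OF h'(1) k p] h(2) by auto
  next
    fix a b T assume a: "a \<in> hom C T K" and b: "b \<in> hom C T K" and eq: "(p \<cdot> k) \<cdot> a = (p \<cdot> k) \<cdot> b"
    have "q \<cdot> (k \<cdot> a) = q \<cdot> (k \<cdot> b)"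
      using zero_mor_unique[OF comp_in_hom[OF comp_in_hom[OF a k] q] q_zero[OF a]
          comp_in_hom[OF comp_in_hom[OF b k] q] q_zero[OF b]] .
    moreover have "p \<cdot> (k \<cdot> a) = p \<cdot> (k \<cdot> b)"
      using eq comp_assoc[OF a k p] comp_assoc[OF b k p] by simp
    ultimately have "k \<cdot> a = k \<cdot> b"
      using pb_monic[OF comp_in_hom[OF a k] comp_in_hom[OF b k]] by simp
    then show "a = b"
      using kernel_cancel[OF ker, folded K_def, OF a b] by blast
  qed
qed

lemma strong_complete_imp_complete_star:
  assumes X: "X \<in> Obj C" and strong: "strong_complete C X"
  shows "complete_star C X"
  unfolding complete_star_def
proof (intro allI impI, elim conjE)
  fix m assume "bourn_normal C m" and "Dom C m = X"
  then obtain R r1 r2 p1 p2 mt where m: "m \<in> hom C X (Cod C m)"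
    and er: "equiv_rel C (Cod C m) R r1 r2" and pr: "is_product C X X p1 p2"
    and mt: "mt \<in> hom C (Dom C p1) R" and mt1: "r1 \<cdot> mt = m \<cdot> p1" and mt2: "r2 \<cdot> mt = m \<cdot> p2"
    and pb: "is_pullback C r1 m mt p1"
    unfolding bourn_normal_def mono_def hom_def by auto
  define P where "P = Dom C p1"
  note mt = mt[folded P_def]
  have p2: "p2 \<in> hom C P X"
    using product_data[OF pr] unfolding P_def by auto
  obtain z where z: "z \<in> hom C X X" "zero_mor C z"
    using ex_zero_mor[OF X X] .
  obtain i2 where i2: "i2 \<in> hom C X P" "p1 \<cdot> i2 = z" "p2 \<cdot> i2 = Idm C X"
    using product_factor[OF pr z(1) id_in_hom[OF X], folded P_def] by metis
  have strong_at: "\<exists>!r. r \<in> hom C (Cod C k) X \<and> r \<cdot> k = Idm C X"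
    if "protosplit_mono C k" "k \<in> hom C X K" for k K
    using strong that unfolding strong_complete_def hom_def by blast
  have ker_i2: "is_kernel C i2 p1"
    using product_injection_kernel[OF pr] i2 z(2) unfolding P_def by simp
  then have "protosplit_mono C i2"
    unfolding protosplit_mono_def using product_proj_split_epi[OF pr] by blast
  moreover have "Cod C i2 = P"
    using i2(1) by (simp add: hom_def)
  ultimately have unique_retraction: "\<exists>!r. r \<in> hom C P X \<and> r \<cdot> i2 = Idm C X"
    using strong_at[OF _ i2(1)] by simp
  have "protosplit_mono C (mt \<cdot> i2)"
    unfolding protosplit_mono_def
    using kernel_pullback_comp[OF pb ker_i2] equiv_rel_split_epi[OF er] by blast
  then obtain \<rho> where \<rho>: "\<rho> \<in> hom C R X" "\<rho> \<cdot> (mt \<cdot> i2) = Idm C X"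
    using strong_at[OF _ comp_in_hom[OF i2(1) mt]] comp_in_hom[OF i2(1) mt]
    by (auto simp: hom_def)
  have "\<rho> \<cdot> mt \<in> hom C P X \<and> (\<rho> \<cdot> mt) \<cdot> i2 = Idm C X"
    using comp_in_hom[OF mt \<rho>(1)] \<rho>(2) comp_assoc[OF i2(1) mt \<rho>(1)] by simp
  then have "\<rho> \<cdot> mt = p2"
    using unique_retraction p2 i2(3) by metis
  then show "split_mono C m"
    using bourn_normal_retraction[OF m er pr mt[unfolded P_def] mt1 mt2 \<rho>(1)] by blast
qed

end

lemma complete_imp_proto_complete: "complete C X \<Longrightarrow> proto_complete C X"
  unfolding complete_def proto_complete_def protosplit_mono_def normal_mono_def by blast

theorem proposition4p7:
  fixes C :: "('o, 'a) cat" and X :: 'o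
  assumes "category C" and "pointed C" and "has_finite_limits C" and "protomodular C"
    and "X \<in> Obj C"
  shows "(strong_complete C X \<longrightarrow> complete_star C X) \<and>
         (complete_star C X \<longrightarrow> complete C X) \<and>
         (complete C X \<longrightarrow> proto_complete C X)"
proof (intro conjI impI)
  interpret pointed_cat C
    using assms(1,2) by unfold_locales
  show "complete_star C X" if "strong_complete C X"
    using strong_complete_imp_complete_star[OF assms(5) that] .
  show "complete C X" if "complete_star C X"
    using complete_star_imp_complete[OF assms(3) that] .
  show "proto_complete C X" if "complete C X"
    using complete_imp_proto_complete[OF that] .
qed

end
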